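(* Let $r,\sigma,s,c,\lambda,a>0$ with $a<\lambda$ and $1-\lambda r>0$, and let $\theta=\sqrt{2r/\sigma^2}$. Let $C_{11},C_{12}\in\mathbb{R}$ and $\bar x_1<x_1^*<\bar x_2$ be such that, with $\varphi_1(x)=C_{11}e^{\theta x}+C_{12}e^{-\theta x}+\frac{x-s}{r}$, $$\varphi_1'(x_1^* )=\lambda,\ \ \varphi_1''(x_1^* )\le0,\ \ \varphi_1'(\bar x_1)=\lambda,\ \ \varphi_1(\bar x_1)=\varphi_1(x_1^* )-c-\lambda(x_1^*-\bar x_1),\ \ \varphi_1(\bar x_2)=a\bar x_2 .$$ Define $$W_1(x)=\begin{cases}ax & x\ge\bar x_2\\ \varphi_1(x) & \bar x_1<x<\bar x_2\\ \varphi_1(x_1^* )-c-\lambda(x_1^*-x) & x\le\bar x_1,\end{cases}$$ and, for $x\in\mathbb{R}$, $\mathcal{M}W_1(x)=\sup_{\delta\ge0}\{W_1(x+\delta)-c-\lambda\delta\}$. Then for each $x\in\mathbb{R}$ the maximizer over $\delta\ge0$ of $W_1(x+\delta)-c-\lambda\delta$ is unique and equals $$\delta(x)=(x_1^*-x)\mathbf{1}_{(-\infty,x_1^*]}(x),$$ and moreover $$\{x:\mathcal{M}W_1(x)-W_1(x)<0\}=(\bar x_1,\infty),\qquad \{x:\mathcal{M}W_1(x)-W_1(x)=0\}=(-\infty,\bar x_1].$$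
   Context: This is the candidate equilibrium payoff of player P1 in a linear impulse controller–stopper game: state $X_t=x+\sigma W_t+\sum_{\tau_n\le t}\delta_n$, P1 pays $c+\lambda|\delta|$ per impulse $\delta\ge0$, and receives running payoff $x-s$ and terminal payoff $ax$, all discounted at rate $r$. *)

theory Defs
  imports "HOL-Analysis.Analysis"
begin

definition phi1 :: "real \<Rightarrow> real \<Rightarrow> real \<Rightarrow> real \<Rightarrow> real \<Rightarrow> real \<Rightarrow> real" where
  "phi1 theta r s C11 C12 x = C11 * exp (theta * x) + C12 * exp (- theta * x) + (x - s) / r"

definition W1 :: "(real \<Rightarrow> real) \<Rightarrow> real \<Rightarrow> real \<Rightarrow> real \<Rightarrow> real \<Rightarrow> real \<Rightarrow> real \<Rightarrow> real \<Rightarrow> real" where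
  "W1 phi a c lam xbar1 xstar xbar2 x =
     (if x \<ge> xbar2 then a * x
      else if xbar1 < x then phi x
      else phi xstar - c - lam * (xstar - x))"

definition MW :: "(real \<Rightarrow> real) \<Rightarrow> real \<Rightarrow> real \<Rightarrow> real \<Rightarrow> real" where
  "MW W c lam x = (SUP d\<in>{0..}. W (x + d) - c - lam * d)"

end

theory Submission
  imports Defs
begin

(* Put g = W1 - lam * id.  The derivative phi1' - lam equals exp (-theta x) times a quadratic in
   exp (theta x), so its only zeros are xbar1 and xstar, and lam < 1/r makes it positive between
   them and negative beyond xstar.  Hence g is constant on (-inf, xbar1], increases on
   [xbar1, xstar] and decreases afterwards (with slope a - lam < 0 past xbar2), so xstar is the
   strict global maximum of g.  An impulse from x therefore lands at max x xstar, and
   MW1 - W1 = g (max x xstar) - g x - c, which by the value matching at xbar1 vanishes exactly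
   for x <= xbar1. *)

lemma shifted_peak_maximum:
  fixes g :: "real \<Rightarrow> real"
  assumes peak: "\<And>y. y \<noteq> m \<Longrightarrow> g y < g m"
    and decr: "\<And>u w. m \<le> u \<Longrightarrow> u < w \<Longrightarrow> g w < g u"
    and "x \<le> y" "y \<noteq> max x m"
  shows "g y < g (max x m)"
  using assms by (cases "x \<le> m") (auto simp: max_def)

lemma impulse_maximizer_unique:
  fixes W :: "real \<Rightarrow> real"
  assumes peak: "\<And>y. y \<noteq> m \<Longrightarrow> W y - lam * y < W m - lam * m"
    and decr: "\<And>u w. m \<le> u \<Longrightarrow> u < w \<Longrightarrow> W w - lam * w < W u - lam * u"
  shows "{d. d \<ge> 0 \<and> (\<forall>d'\<ge>0. W (x + d') - c - lam * d' \<le> W (x + d) - c - lam * d)}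
           = {max x m - x}"
proof -
  define g where "g y = W y - lam * y" for y
  have opt: "x \<le> y \<Longrightarrow> y \<noteq> max x m \<Longrightarrow> g y < g (max x m)" for y
    using shifted_peak_maximum[of m g] peak decr unfolding g_def by blast
  have shift: "W (x + d) - c - lam * d = g (x + d) + lam * x - c" for d
    by (simp add: g_def algebra_simps)
  have "d \<ge> 0 \<and> (\<forall>d'\<ge>0. g (x + d') \<le> g (x + d)) \<longleftrightarrow> d = max x m - x" for d
  proof
    assume H: "d \<ge> 0 \<and> (\<forall>d'\<ge>0. g (x + d') \<le> g (x + d))"
    then have "g (max x m) \<le> g (x + d)"
      by (metis add_diff_cancel_left' add_diff_eq diff_ge_0_iff_ge max.cobounded1)
    then show "d = max x m - x"
      using H opt[of "x + d"] by fastforce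
  next
    assume "d = max x m - x"
    then show "d \<ge> 0 \<and> (\<forall>d'\<ge>0. g (x + d') \<le> g (x + d))"
      using opt by (metis add.commute diff_add_cancel diff_ge_0_iff_ge le_add_same_cancel2
          less_eq_real_def max.cobounded1)
  qed
  then show ?thesis
    unfolding shift by auto
qed

lemma MW_eq_at_peak:
  fixes W :: "real \<Rightarrow> real"
  assumes peak: "\<And>y. y \<noteq> m \<Longrightarrow> W y - lam * y < W m - lam * m"
    and decr: "\<And>u w. m \<le> u \<Longrightarrow> u < w \<Longrightarrow> W w - lam * w < W u - lam * u"
  shows "MW W c lam x = W (max x m) - c - lam * (max x m - x)"
  unfolding MW_def
proof (rule cSup_eq_maximum)
  have "max x m - x \<in> {d. d \<ge> 0 \<and> (\<forall>d'\<ge>0. W (x + d') - c - lam * d' \<le> W (x + d) - c - lam * d)}"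
    using impulse_maximizer_unique[OF peak decr] by blast
  then show "W (max x m) - c - lam * (max x m - x) \<in> (\<lambda>d. W (x + d) - c - lam * d) ` {0..}"
    and "\<And>z. z \<in> (\<lambda>d. W (x + d) - c - lam * d) ` {0..}
           \<Longrightarrow> z \<le> W (max x m) - c - lam * (max x m - x)"
    by (force intro: image_eqI[of _ _ "max x m - x"])+
qed

lemma phi1_has_real_derivative:
  "(phi1 \<theta> r s C11 C12 has_real_derivative
      \<theta> * C11 * exp (\<theta> * x) - \<theta> * C12 / exp (\<theta> * x) + 1 / r) (at x)"
  unfolding phi1_def
  by (auto intro!: derivative_eq_intros simp: exp_minus divide_inverse algebra_simps)

lemma phi1_deriv_crossings:
  fixes \<theta> r s C11 C12 lam p q :: real
  defines "\<phi> \<equiv> phi1 \<theta> r s C11 C12"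
  assumes \<theta>: "\<theta> > 0" and "p < q" and lam: "lam < 1 / r"
    and p: "deriv \<phi> p = lam" and q: "deriv \<phi> q = lam"
  shows "\<And>y. p < y \<Longrightarrow> y < q \<Longrightarrow> lam < deriv \<phi> y"
    and "\<And>y. q < y \<Longrightarrow> deriv \<phi> y < lam"
proof -
  define D where "D y = \<theta> * C11 * exp (\<theta> * y) - \<theta> * C12 / exp (\<theta> * y) + 1 / r" for y
  have deriv_\<phi>: "deriv \<phi> y = D y" for y
    unfolding \<phi>_def D_def using phi1_has_real_derivative by (rule DERIV_imp_deriv)
  define A B where "A = exp (\<theta> * p)" and "B = exp (\<theta> * q)"
  have A: "A > 0" and AB: "A < B"
    using \<theta> \<open>p < q\<close> by (auto simp: A_def B_def)
  have eq_q: "\<theta> * C11 * B - \<theta> * C12 / B + 1 / r = lam"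
    using q deriv_\<phi> by (simp add: D_def B_def)
  have eq_p: "\<theta> * C11 * A - \<theta> * C12 / A + 1 / r = lam"
    using p deriv_\<phi> by (simp add: D_def A_def)
  have "\<theta> * (B - A) * (C11 + C12 / (A * B))
      = (\<theta> * C11 * B - \<theta> * C12 / B) - (\<theta> * C11 * A - \<theta> * C12 / A)"
    using A AB by (simp add: field_simps)
  then have "\<theta> * (B - A) * (C11 + C12 / (A * B)) = 0"
    using eq_p eq_q by linarith
  then have C11: "C11 = - C12 / (A * B)"
    using \<theta> AB by (simp add: eq_neg_iff_add_eq_0)
  have "\<theta> * C11 * B - \<theta> * C12 / B < 0"
    using eq_q lam by linarith
  then have "C12 * (\<theta> * (1 / A + 1 / B)) > 0"
    using C11 A AB by (simp add: field_simps)
  moreover have "\<theta> * (1 / A + 1 / B) > 0"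
    using \<theta> A AB by (intro mult_pos_pos add_pos_pos) auto
  ultimately have C12: "C12 > 0"
    using zero_less_mult_pos2 by blast
  have factor: "D y - lam
      = - \<theta> * C12 * (exp (\<theta> * y) - A) * (exp (\<theta> * y) - B) / (A * B * exp (\<theta> * y))" for y
  proof -
    have "D y - lam
        = \<theta> * C11 * exp (\<theta> * y) - \<theta> * C12 / exp (\<theta> * y) - (\<theta> * C11 * B - \<theta> * C12 / B)"
      unfolding D_def using eq_q by linarith
    also have "\<dots> = - \<theta> * C12 * (exp (\<theta> * y) - A) * (exp (\<theta> * y) - B) / (A * B * exp (\<theta> * y))"
      unfolding C11 using A AB by (simp add: field_simps)
    finally show ?thesis .
  qed
  show "lam < deriv \<phi> y" if "p < y" "y < q" for y
  proof -
    have "A < exp (\<theta> * y)" "exp (\<theta> * y) < B"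
      using that \<theta> by (auto simp: A_def B_def)
    then have "\<theta> * C12 * (exp (\<theta> * y) - A) * (B - exp (\<theta> * y)) / (A * B * exp (\<theta> * y)) > 0"
      using \<theta> C12 A AB by (intro divide_pos_pos mult_pos_pos) auto
    then show ?thesis
      using factor[of y] deriv_\<phi> by (simp add: algebra_simps)
  qed
  show "deriv \<phi> y < lam" if "q < y" for y
  proof -
    have "A < exp (\<theta> * y)" "B < exp (\<theta> * y)"
      using that \<theta> \<open>p < q\<close> by (auto simp: A_def B_def)
    then have "\<theta> * C12 * (exp (\<theta> * y) - A) * (exp (\<theta> * y) - B) / (A * B * exp (\<theta> * y)) > 0"
      using \<theta> C12 A AB by (intro divide_pos_pos mult_pos_pos) auto
    moreover have "D y - lam
        = - (\<theta> * C12 * (exp (\<theta> * y) - A) * (exp (\<theta> * y) - B) / (A * B * exp (\<theta> * y)))"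
      using factor[of y] by simp
    ultimately show ?thesis
      using deriv_\<phi>[of y] by linarith
  qed
qed

lemma phi1_minus_linear_monotone:
  fixes \<theta> r s C11 C12 lam p q :: real
  defines "\<phi> \<equiv> phi1 \<theta> r s C11 C12"
  assumes "\<theta> > 0" "p < q" "lam < 1 / r" "deriv \<phi> p = lam" "deriv \<phi> q = lam"
  shows "\<And>u w. p \<le> u \<Longrightarrow> u < w \<Longrightarrow> w \<le> q \<Longrightarrow> \<phi> u - lam * u < \<phi> w - lam * w"
    and "\<And>u w. q \<le> u \<Longrightarrow> u < w \<Longrightarrow> \<phi> w - lam * w < \<phi> u - lam * u"
proof -
  define G where "G y = \<phi> y - lam * y" for y
  have G': "(G has_real_derivative deriv \<phi> y - lam) (at y)" for y
    unfolding G_def \<phi>_def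
    by (auto intro!: derivative_eq_intros phi1_has_real_derivative
        simp: DERIV_imp_deriv[OF phi1_has_real_derivative])
  have "continuous_on S G" for S
    using G' by (meson DERIV_isCont continuous_at_imp_continuous_on)
  note cross = phi1_deriv_crossings[OF assms(2-6)[unfolded \<phi>_def], folded \<phi>_def]
  show "\<phi> u - lam * u < \<phi> w - lam * w" if "p \<le> u" "u < w" "w \<le> q" for u w
    using DERIV_pos_imp_increasing_open[OF \<open>u < w\<close> _ \<open>continuous_on _ G\<close>] G' cross(1) that
    unfolding G_def by force
  show "\<phi> w - lam * w < \<phi> u - lam * u" if "q \<le> u" "u < w" for u w
    using DERIV_neg_imp_decreasing_open[OF \<open>u < w\<close> _ \<open>continuous_on _ G\<close>] G' cross(2) that
    unfolding G_def by force
qed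

context
  fixes \<phi> :: "real \<Rightarrow> real" and a c lam xbar1 xstar xbar2 :: real
  assumes ord: "xbar1 < xstar" "xstar < xbar2"
    and alam: "a < lam"
    and incr: "\<And>u w. xbar1 \<le> u \<Longrightarrow> u < w \<Longrightarrow> w \<le> xstar \<Longrightarrow> \<phi> u - lam * u < \<phi> w - lam * w"
    and decr: "\<And>u w. xstar \<le> u \<Longrightarrow> u < w \<Longrightarrow> \<phi> w - lam * w < \<phi> u - lam * u"
    and v1: "\<phi> xbar1 = \<phi> xstar - c - lam * (xstar - xbar1)"
    and v2: "\<phi> xbar2 = a * xbar2"
begin

lemma W1_minus_linear_below:
  "y \<le> xbar1 \<Longrightarrow> W1 \<phi> a c lam xbar1 xstar xbar2 y - lam * y = \<phi> xbar1 - lam * xbar1"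
  using ord v1 unfolding W1_def by (auto simp: algebra_simps)

lemma W1_minus_linear_between:
  "xbar1 < y \<Longrightarrow> y < xbar2 \<Longrightarrow> W1 \<phi> a c lam xbar1 xstar xbar2 y - lam * y = \<phi> y - lam * y"
  unfolding W1_def by auto

lemma W1_minus_linear_decreasing:
  assumes "xstar \<le> u" "u < w"
  shows "W1 \<phi> a c lam xbar1 xstar xbar2 w - lam * w < W1 \<phi> a c lam xbar1 xstar xbar2 u - lam * u"
proof (cases "w < xbar2")
  case True
  then show ?thesis
    using assms ord decr W1_minus_linear_between by auto
next
  case w: False
  have W_w: "W1 \<phi> a c lam xbar1 xstar xbar2 w - lam * w = (a - lam) * w"
    using w unfolding W1_def by (simp add: algebra_simps)
  show ?thesis
  proof (cases "xbar2 \<le> u")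
    case True
    have "(a - lam) * w < (a - lam) * u"
      using assms alam by (intro mult_strict_left_mono_neg) auto
    moreover have "W1 \<phi> a c lam xbar1 xstar xbar2 u - lam * u = (a - lam) * u"
      using True unfolding W1_def by (simp add: algebra_simps)
    ultimately show ?thesis
      using W_w by simp
  next
    case False
    have "W1 \<phi> a c lam xbar1 xstar xbar2 w - lam * w \<le> (a - lam) * xbar2"
      unfolding W_w using w alam by (intro mult_left_mono_neg) auto
    also have "\<dots> = \<phi> xbar2 - lam * xbar2"
      using v2 by (simp add: algebra_simps)
    also have "\<dots> < \<phi> u - lam * u"
      using False assms decr by auto
    also have "\<dots> = W1 \<phi> a c lam xbar1 xstar xbar2 u - lam * u"
      using False assms ord W1_minus_linear_between by auto
    finally show ?thesis .
  qed
qed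

lemma W1_minus_linear_peak:
  assumes "y \<noteq> xstar"
  shows "W1 \<phi> a c lam xbar1 xstar xbar2 y - lam * y
    < W1 \<phi> a c lam xbar1 xstar xbar2 xstar - lam * xstar"
proof -
  have W_xstar: "W1 \<phi> a c lam xbar1 xstar xbar2 xstar - lam * xstar = \<phi> xstar - lam * xstar"
    using ord W1_minus_linear_between by auto
  consider "y \<le> xbar1" | "xbar1 < y" "y < xstar" | "xstar < y"
    using assms by linarith
  then show ?thesis
  proof cases
    case 1
    then show ?thesis
      using W_xstar W1_minus_linear_below[of y] incr[of xbar1 xstar] ord by auto
  next
    case 2
    then show ?thesis
      using W_xstar W1_minus_linear_between[of y] incr[of y xstar] ord by auto
  next
    case 3
    then show ?thesis
      using W1_minus_linear_decreasing[of xstar y] by auto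
  qed
qed

lemma W1_intervention_gap:
  "MW (W1 \<phi> a c lam xbar1 xstar xbar2) c lam x - W1 \<phi> a c lam xbar1 xstar xbar2 x
     = (W1 \<phi> a c lam xbar1 xstar xbar2 (max x xstar) - lam * max x xstar)
       - (W1 \<phi> a c lam xbar1 xstar xbar2 x - lam * x) - c"
  using MW_eq_at_peak[OF W1_minus_linear_peak W1_minus_linear_decreasing]
  by (simp add: algebra_simps)

lemma W1_intervention_gap_zero:
  assumes "x \<le> xbar1"
  shows "MW (W1 \<phi> a c lam xbar1 xstar xbar2) c lam x - W1 \<phi> a c lam xbar1 xstar xbar2 x = 0"
proof -
  have "max x xstar = xstar"
    using assms ord by simp
  then show ?thesis
    using assms ord v1 W1_intervention_gap[of x] W1_minus_linear_below[of x]
      W1_minus_linear_between[of xstar]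
    by (simp add: algebra_simps)
qed

lemma W1_intervention_gap_neg:
  assumes "c > 0" "xbar1 < x"
  shows "MW (W1 \<phi> a c lam xbar1 xstar xbar2) c lam x - W1 \<phi> a c lam xbar1 xstar xbar2 x < 0"
proof (cases "x \<le> xstar")
  case True
  have "\<phi> xbar1 - lam * xbar1 < \<phi> x - lam * x \<or> x = xbar1"
    using True assms incr[of xbar1 x] by force
  then show ?thesis
    using True assms ord v1 W1_intervention_gap[of x] W1_minus_linear_between[of x]
      W1_minus_linear_between[of xstar]
    by (simp add: max_def algebra_simps)
next
  case False
  then show ?thesis
    using assms W1_intervention_gap[of x] by (simp add: max_def)
qed

end

theorem lemmaA1:
  fixes r sigma s c lam a C11 C12 xbar1 xstar xbar2 :: real
  defines "theta \<equiv> sqrt (2 * r / sigma\<^sup>2)"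
  defines "\<phi> \<equiv> phi1 theta r s C11 C12"
  defines "W \<equiv> W1 \<phi> a c lam xbar1 xstar xbar2"
  assumes pos: "r > 0" "sigma > 0" "s > 0" "c > 0" "lam > 0" "a > 0"
    and alam: "a < lam" and lamr: "1 - lam * r > 0"
    and ord: "xbar1 < xstar" "xstar < xbar2"
    and d1: "deriv \<phi> xstar = lam"
    and d2: "deriv (deriv \<phi>) xstar \<le> 0"
    and d3: "deriv \<phi> xbar1 = lam"
    and v1: "\<phi> xbar1 = \<phi> xstar - c - lam * (xstar - xbar1)"
    and v2: "\<phi> xbar2 = a * xbar2"
  shows "(\<forall>x. {d. d \<ge> 0 \<and> (\<forall>d'\<ge>0. W (x + d') - c - lam * d' \<le> W (x + d) - c - lam * d)}
               = {(xstar - x) * indicator {..xstar} x})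
         \<and> {x. MW W c lam x - W x < 0} = {xbar1<..}
         \<and> {x. MW W c lam x - W x = 0} = {..xbar1}"
proof -
  have "theta > 0"
    using pos by (simp add: theta_def)
  moreover have "lam < 1 / r"
    using lamr pos by (simp add: field_simps)
  ultimately have
      incr: "\<And>u w. xbar1 \<le> u \<Longrightarrow> u < w \<Longrightarrow> w \<le> xstar \<Longrightarrow> \<phi> u - lam * u < \<phi> w - lam * w"
    and decr: "\<And>u w. xstar \<le> u \<Longrightarrow> u < w \<Longrightarrow> \<phi> w - lam * w < \<phi> u - lam * u"
    using phi1_minus_linear_monotone[of theta xbar1 xstar lam r s C11 C12] ord d1 d3
    unfolding \<phi>_def by blast+
  note W1_hyps = ord alam incr decr v1 v2
  have peak: "\<And>y. y \<noteq> xstar \<Longrightarrow> W y - lam * y < W xstar - lam * xstar"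
    unfolding W_def by (rule W1_minus_linear_peak) (use W1_hyps in auto)
  have decreasing: "\<And>u w. xstar \<le> u \<Longrightarrow> u < w \<Longrightarrow> W w - lam * w < W u - lam * u"
    unfolding W_def by (rule W1_minus_linear_decreasing) (use W1_hyps in auto)
  have gap_zero: "\<And>x. x \<le> xbar1 \<Longrightarrow> MW W c lam x - W x = 0"
    unfolding W_def by (rule W1_intervention_gap_zero) (use W1_hyps in auto)
  have gap_neg: "\<And>x. xbar1 < x \<Longrightarrow> MW W c lam x - W x < 0"
    unfolding W_def by (rule W1_intervention_gap_neg) (use W1_hyps pos(4) in auto)
  have "(xstar - x) * indicator {..xstar} x = max x xstar - x" for x
    by (auto simp: indicator_def max_def)
  then have maximizer: "\<forall>x. {d. d \<ge> 0 \<and> (\<forall>d'\<ge>0. W (x + d') - c - lam * d' \<le> W (x + d) - c - lam * d)}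
               = {(xstar - x) * indicator {..xstar} x}"
    using impulse_maximizer_unique[OF peak decreasing] by simp
  show ?thesis
    using maximizer gap_zero gap_neg
    by (force simp: not_le[symmetric])
qed

end
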